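(* Let $a,b,m$ be parameters. The power series $$\left(\frac{1+ax}{1+bx},\ \frac{mx(1+ax)}{(1+bx)^2}\right)\cdot c(x)=\frac{1+ax}{1+bx}\,c\!\left(\frac{mx(1+ax)}{(1+bx)^2}\right)$$ is the generating function of the sequence $(a_n)_{n\ge0}$ determined by $a_0=1$, $a_1=a-b+m$, and, for $n\ge2$, $$a_n=(2m-b)\,a_{n-1}+m\sum_{k=0}^{n-3}a_{k+1}a_{n-k-2}.$$
   Context: $c(x)=\frac{1-\sqrt{1-4x}}{2x}$ is the generating function of the Catalan numbers. For power series $g(x)$ with $g(0)\neq0$ and $f(x)$ with $f(0)=0$, the Riordan array $(g,f)$ acts on a power series $h(x)$ by $(g,f)\cdot h(x)=g(x)h(f(x))$. *)

theory Defs
  imports "HOL-Computational_Algebra.Formal_Power_Series"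
begin

definition catalan :: "nat \<Rightarrow> nat" where
  "catalan n = (2 * n choose n) div (n + 1)"

definition catalan_fps :: "'a::field fps" where
  "catalan_fps = Abs_fps (\<lambda>n. of_nat (catalan n))"

definition riordan_act :: "'a::field fps \<Rightarrow> 'a fps \<Rightarrow> 'a fps \<Rightarrow> 'a fps" where
  "riordan_act g f h = g * (h oo f)"

end

theory Submission
  imports Defs
begin

text \<open>
  Composing the Catalan equation \<open>c = 1 + x c\<^sup>2\<close> with \<open>f\<close> and multiplying by \<open>g\<close> shows that
  \<open>F = g \<cdot> (c \<circ> f)\<close> satisfies \<open>g F = g\<^sup>2 + f F\<^sup>2\<close>. For \<open>g = v/u\<close> and \<open>f = h v/u\<^sup>2\<close> this
  clears to \<open>u F = v + h F\<^sup>2\<close>, here \<open>(1 + bx) F = 1 + ax + mx F\<^sup>2\<close>, and comparing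
  coefficients gives the recurrence. The Catalan equation is proved in characteristic 0, where
  \<open>1 - 2xc\<close> is the binomial series of \<open>sqrt (1 - 4x)\<close>; the Catalan recurrence it yields is a
  statement about natural numbers and therefore transfers to every field.
\<close>

unbundle fps_syntax

lemma Suc_times_catalan: "Suc n * catalan n = 2 * n choose n"
proof -
  have shifted: "Suc n * (2 * n choose Suc n) = n * (2 * n choose n)"
  proof (cases n)
    case (Suc k)
    have "Suc (Suc k) * (Suc (Suc k + k) choose Suc (Suc k)) = Suc k * (Suc (Suc k + k) choose Suc k)"
      using Suc_times_binomial_add[of "Suc k" k] by simp
    then show ?thesis using Suc by (simp add: mult_2)
  qed simp
  have "Suc n * ((2 * n choose n) - (2 * n choose Suc n)) = Suc n * (2 * n choose n) - n * (2 * n choose n)"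
    by (subst diff_mult_distrib2) (simp only: shifted)
  also have "\<dots> = 2 * n choose n"
    by simp
  finally have "Suc n dvd 2 * n choose n"
    by (metis dvd_triv_left)
  from dvd_mult_div_cancel[OF this] show ?thesis
    unfolding catalan_def by simp
qed

lemma gbinomial_half_Suc:
  "((1/2 :: 'a::field_char_0) gchoose Suc n) * (-4) ^ Suc n = - 2 * of_nat (catalan n)"
proof -
  have "of_nat (Suc n) * of_nat (catalan n) = (of_nat (2 * n choose n) :: 'a)"
    by (metis of_nat_mult Suc_times_catalan)
  also have "\<dots> = 4 ^ n * pochhammer (1/2) n / fact n"
    using binomial_fact[of n "2 * n", where 'a = 'a] fact_double[of n, where 'a = 'a]
    by (simp add: power_mult)
  finally have cat: "of_nat (catalan n) = (4 ^ n * pochhammer (1/2) n / fact (Suc n) :: 'a)"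
    by (simp add: field_simps del: of_nat_Suc)
  have half: "((1/2 :: 'a) gchoose Suc n) = (-1) ^ Suc n * (- pochhammer (1/2) n / (2 * fact (Suc n)))"
    by (simp add: gbinomial_pochhammer pochhammer_rec)
  have "((1/2 :: 'a) gchoose Suc n) * (-4) ^ Suc n
      = ((-1) ^ Suc n * (-4) ^ Suc n) * (- pochhammer (1/2) n / (2 * fact (Suc n)))"
    unfolding half by (simp only: mult_ac)
  also have "(-1) ^ Suc n * (-4) ^ Suc n = (4 ^ Suc n :: 'a)"
    by (simp flip: power_mult_distrib)
  finally show ?thesis
    unfolding cat by (simp add: field_simps del: fact_Suc)
qed

lemma catalan_fps_char_0: "(catalan_fps :: 'a::field_char_0 fps) = 1 + fps_X * catalan_fps ^ 2"
proof -
  define C :: "'a fps" where "C = catalan_fps"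
  define S :: "'a fps" where "S = fps_binomial (1/2) oo (fps_const (-4) * fps_X)"
  have "S = 1 - 2 * fps_X * C"
  proof (rule fps_ext)
    fix n
    have S_nth: "S $ k = (1/2 gchoose k) * (-4) ^ k" for k
      by (simp add: S_def fps_compose_linear)
    show "S $ n = (1 - 2 * fps_X * C) $ n"
    proof (cases n)
      case (Suc j)
      have "S $ Suc j = - 2 * of_nat (catalan j)"
        unfolding S_nth by (rule gbinomial_half_Suc)
      then show ?thesis
        using Suc by (simp add: C_def catalan_fps_def numeral_fps_const mult.assoc)
    qed (simp add: S_nth C_def)
  qed
  moreover have "S ^ 2 = 1 - 4 * fps_X"
  proof -
    have "S ^ 2 = fps_binomial (1/2) ^ 2 oo (fps_const (-4) * fps_X)"
      unfolding S_def by (simp add: fps_compose_power)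
    also have "fps_binomial (1/2) ^ 2 = (fps_binomial 1 :: 'a fps)"
      by (simp add: fps_binomial_power)
    finally show ?thesis
      by (simp add: fps_binomial_1 fps_compose_add_distrib numeral_fps_const flip: fps_const_neg)
  qed
  ultimately have "4 * fps_X * (1 + fps_X * C ^ 2 - C) = 0"
    by algebra
  then show ?thesis
    unfolding C_def by simp
qed

lemma catalan_Suc: "catalan (Suc n) = (\<Sum>i\<le>n. catalan i * catalan (n - i))"
proof -
  have "(catalan_fps :: rat fps) $ Suc n = (catalan_fps ^ 2) $ n"
    by (subst catalan_fps_char_0) simp
  then have "(of_nat (catalan (Suc n)) :: rat) = (\<Sum>i\<le>n. of_nat (catalan i) * of_nat (catalan (n - i)))"
    by (simp add: catalan_fps_def power2_eq_square fps_mult_nth atLeast0AtMost)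
  then show ?thesis
    by (simp flip: of_nat_mult of_nat_sum)
qed

lemma catalan_fps_eq: "(catalan_fps :: 'a::field fps) = 1 + fps_X * catalan_fps ^ 2"
proof (rule fps_ext)
  fix n
  show "(catalan_fps :: 'a fps) $ n = (1 + fps_X * catalan_fps ^ 2) $ n"
  proof (cases n)
    case (Suc j)
    have "(1 + fps_X * catalan_fps ^ 2) $ Suc j = ((catalan_fps :: 'a fps) ^ 2) $ j"
      by simp
    then show ?thesis
      using Suc by (simp add: catalan_fps_def catalan_Suc power2_eq_square fps_mult_nth atLeast0AtMost)
  qed (simp add: catalan_fps_def catalan_def)
qed

lemma riordan_act_catalan_fps:
  fixes g f :: "'a::field fps"
  assumes "f $ 0 = 0"
  shows "g * riordan_act g f catalan_fps = g ^ 2 + f * (riordan_act g f catalan_fps) ^ 2"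
proof -
  define D where "D = catalan_fps oo f"
  have "D = (1 + fps_X * catalan_fps ^ 2) oo f"
    unfolding D_def by (subst catalan_fps_eq) (rule refl)
  also have "\<dots> = 1 + f * D ^ 2"
    using assms by (simp add: D_def fps_compose_add_distrib fps_compose_mult_distrib fps_compose_power)
  finally have "D = 1 + f * D ^ 2" .
  then show ?thesis
    unfolding riordan_act_def D_def[symmetric] by algebra
qed

lemma riordan_act_catalan_fps_fraction:
  fixes u v h :: "'a::field fps"
  assumes u0: "u $ 0 \<noteq> 0" and v0: "v $ 0 \<noteq> 0" and h0: "h $ 0 = 0"
  defines "F \<equiv> riordan_act (v / u) (h * v / u ^ 2) catalan_fps"
  shows "u * F = v + h * F ^ 2"
proof -
  have "v / u * F = (v / u) ^ 2 + h * v / u ^ 2 * F ^ 2"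
    unfolding F_def using u0 h0 by (intro riordan_act_catalan_fps) simp
  moreover have "v / u * u = v" and "h * v / u ^ 2 * u ^ 2 = h * v"
    using u0 by simp_all
  ultimately have "v * (u * F) = v * (v + h * F ^ 2)"
    by algebra
  moreover have "v \<noteq> 0"
    using v0 by auto
  ultimately show ?thesis
    by simp
qed

lemma sum_convolution_Suc_split:
  fixes t :: "nat \<Rightarrow> 'a::comm_semiring_1"
  shows "(\<Sum>i = 0..Suc n. t i * t (Suc n - i)) = 2 * (t 0 * t (Suc n)) + (\<Sum>k<n. t (Suc k) * t (n - k))"
proof -
  have "(\<Sum>i = 0..Suc n. t i * t (Suc n - i)) = t 0 * t (Suc n) + (\<Sum>i<Suc n. t (Suc i) * t (n - i))"
    by (subst sum.atLeast0_atMost_Suc_shift) (simp add: atLeast0AtMost lessThan_Suc_atMost)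
  also have "(\<Sum>i<Suc n. t (Suc i) * t (n - i)) = (\<Sum>k<n. t (Suc k) * t (n - k)) + t (Suc n) * t 0"
    by (simp only: sum.lessThan_Suc) simp
  finally show ?thesis
    by (simp add: algebra_simps mult_2)
qed

lemma fps_quadratic_equation_nth:
  fixes F :: "'a::comm_ring_1 fps"
  assumes eq: "(1 + fps_const b * fps_X) * F = 1 + fps_const a * fps_X + fps_const m * fps_X * F ^ 2"
  shows "F $ 0 = 1"
    and "F $ 1 = a - b + m"
    and "n \<ge> 2 \<Longrightarrow> F $ n = (2 * m - b) * F $ (n - 1) + m * (\<Sum>k = 0..<n - 2. F $ (k + 1) * F $ (n - k - 2))"
proof -
  have nth_Suc: "F $ Suc j + b * F $ j = (if j = 0 then a else 0) + m * (F ^ 2) $ j" for j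
  proof -
    have "((1 + fps_const b * fps_X) * F) $ Suc j = F $ Suc j + b * F $ j"
      by (simp add: distrib_right mult.assoc)
    moreover have "(1 + fps_const a * fps_X + fps_const m * fps_X * F ^ 2) $ Suc j
        = (if j = 0 then a else 0) + m * (F ^ 2) $ j"
      by (simp add: mult.assoc fps_X_nth)
    ultimately show ?thesis
      using eq by simp
  qed
  show F0: "F $ 0 = 1"
    using arg_cong[OF eq, of "\<lambda>G. G $ 0"] by simp
  show "F $ 1 = a - b + m"
    using nth_Suc[of 0] F0 by (simp add: power2_eq_square algebra_simps)
  assume "n \<ge> 2"
  then obtain j where n: "n = Suc (Suc j)"
    using add_2_eq_Suc le_Suc_ex by blast
  have "(F ^ 2) $ Suc j = 2 * F $ Suc j + (\<Sum>k<j. F $ Suc k * F $ (j - k))"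
    using sum_convolution_Suc_split[of "\<lambda>i. F $ i" j] F0 by (simp add: power2_eq_square fps_mult_nth)
  then show "F $ n = (2 * m - b) * F $ (n - 1) + m * (\<Sum>k = 0..<n - 2. F $ (k + 1) * F $ (n - k - 2))"
    using nth_Suc[of "Suc j"] by (simp add: n atLeast0LessThan algebra_simps)
qed

theorem mainTheorem4:
  fixes a b m :: "'a::field" and s :: "nat \<Rightarrow> 'a"
  assumes s0: "s 0 = 1"
    and s1: "s 1 = a - b + m"
    and srec: "\<And>n. n \<ge> 2 \<Longrightarrow>
      s n = (2 * m - b) * s (n - 1) + m * (\<Sum>k = 0..<n - 2. s (k + 1) * s (n - k - 2))"
  shows "riordan_act ((1 + fps_const a * fps_X) / (1 + fps_const b * fps_X))
           (fps_const m * fps_X * (1 + fps_const a * fps_X) / (1 + fps_const b * fps_X)^2)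
           catalan_fps
         = Abs_fps s"
proof -
  define F where "F = riordan_act ((1 + fps_const a * fps_X) / (1 + fps_const b * fps_X))
    (fps_const m * fps_X * (1 + fps_const a * fps_X) / (1 + fps_const b * fps_X)^2) catalan_fps"
  have eq: "(1 + fps_const b * fps_X) * F = 1 + fps_const a * fps_X + fps_const m * fps_X * F ^ 2"
    unfolding F_def by (rule riordan_act_catalan_fps_fraction) simp_all
  have "F $ n = s n" for n
  proof (induction n rule: less_induct)
    case (less n)
    consider "n = 0" | "n = 1" | "n \<ge> 2"
      by linarith
    then show ?case
    proof cases
      case 3
      then show ?thesis
        using fps_quadratic_equation_nth(3)[OF eq 3] srec[OF 3]
        by (auto simp: less intro!: sum.cong arg_cong2[where f = "(+)"])
    qed (use fps_quadratic_equation_nth(1,2)[OF eq] s0 s1 in simp_all)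
  qed
  then show ?thesis
    unfolding F_def[symmetric] by (intro fps_ext) simp
qed

end
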